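(* Let $\mathcal B$ be finite, $\eta>0$, $B_A>0$, and let $A,\tilde A\in\mathbb R^{\mathcal B}$ satisfy $\|A\|_\infty\le B_A$, $\|\tilde A\|_\infty\le B_A$ and be such that $\nu=\exp(\eta A)$ and $\tilde\nu=\exp(\eta\tilde A)$ are probability vectors on $\mathcal B$. Let ${\rm H}=\mathrm{diag}(\tilde\nu)-\tilde\nu\tilde\nu^\top$ and ${\rm L}=\mathrm{diag}(\nu)-\nu\nu^\top$. Then for every $g\in\mathbb R^{\mathcal B}$, $$e^{2\eta B_A}\,g^\top{\rm L}g\ \ge\ g^\top{\rm H}g\ \ge\ e^{-2\eta B_A}\,g^\top{\rm L}g.$$ *)

theory Defs
  imports "HOL-Analysis.Analysis"
begin

definition cov_matrix :: "('b \<Rightarrow> real) \<Rightarrow> 'b \<Rightarrow> 'b \<Rightarrow> real" where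
  "cov_matrix nu i j = (if i = j then nu i else 0) - nu i * nu j"

definition quad_form :: "('b::finite \<Rightarrow> 'b \<Rightarrow> real) \<Rightarrow> ('b \<Rightarrow> real) \<Rightarrow> real" where
  "quad_form M g = (\<Sum>i\<in>UNIV. \<Sum>j\<in>UNIV. g i * M i j * g j)"

definition sup_norm :: "('b::finite \<Rightarrow> real) \<Rightarrow> real" where
  "sup_norm A = Max (range (\<lambda>b. \<bar>A b\<bar>))"

definition prob_vector :: "('b::finite \<Rightarrow> real) \<Rightarrow> bool" where
  "prob_vector nu \<longleftrightarrow> (\<forall>b. 0 \<le> nu b) \<and> (\<Sum>b\<in>UNIV. nu b) = 1"

end

theory Submission
  imports Defs
begin

(* The quadratic form of diag(nu) - nu nu^T is the variance of g under nu, and a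
   variance is the least mean squared deviation from a constant. Hence if q <= K p
   pointwise, then Var_q(g) <= E_q (g - E_p g)^2 <= K E_p (g - E_p g)^2 = K Var_p(g).
   For Gibbs vectors exp(eta A), exp(eta A~) with sup norms at most B the density
   ratio lies between exp(-2 eta B) and exp(2 eta B), which gives both inequalities. *)

lemma quad_form_cov_matrix:
  fixes p g :: "'b::finite \<Rightarrow> real"
  shows "quad_form (cov_matrix p) g = (\<Sum>i\<in>UNIV. p i * (g i)\<^sup>2) - (\<Sum>i\<in>UNIV. p i * g i)\<^sup>2"
proof -
  have "quad_form (cov_matrix p) g =
      (\<Sum>i\<in>UNIV. \<Sum>j\<in>UNIV. if i = j then g i * p i * g j else 0)
    - (\<Sum>i\<in>UNIV. \<Sum>j\<in>UNIV. (p i * g i) * (p j * g j))"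
    unfolding quad_form_def cov_matrix_def sum_subtractf[symmetric]
    by (intro sum.cong refl) (auto simp: algebra_simps)
  also have "(\<Sum>i\<in>UNIV. \<Sum>j\<in>UNIV. if i = j then g i * p i * g j else 0) = (\<Sum>i\<in>UNIV. p i * (g i)\<^sup>2)"
    by (simp add: power2_eq_square algebra_simps)
  also have "(\<Sum>i\<in>UNIV. \<Sum>j\<in>UNIV. (p i * g i) * (p j * g j)) = (\<Sum>i\<in>UNIV. p i * g i)\<^sup>2"
    by (simp add: power2_eq_square sum_product)
  finally show ?thesis .
qed

lemma quad_form_cov_matrix_add_square:
  fixes p g :: "'b::finite \<Rightarrow> real"
  assumes "(\<Sum>i\<in>UNIV. p i) = 1"
  shows "quad_form (cov_matrix p) g + ((\<Sum>i\<in>UNIV. p i * g i) - c)\<^sup>2 = (\<Sum>i\<in>UNIV. p i * (g i - c)\<^sup>2)"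
proof -
  have "(\<Sum>i\<in>UNIV. p i * (g i - c)\<^sup>2)
      = (\<Sum>i\<in>UNIV. p i * (g i)\<^sup>2) - 2 * c * (\<Sum>i\<in>UNIV. p i * g i) + c\<^sup>2 * (\<Sum>i\<in>UNIV. p i)"
    by (simp add: power2_eq_square algebra_simps sum.distrib sum_subtractf sum_distrib_left)
  with assms show ?thesis
    by (simp add: quad_form_cov_matrix power2_eq_square algebra_simps)
qed

lemma quad_form_cov_matrix_mono:
  fixes p q g :: "'b::finite \<Rightarrow> real"
  assumes "(\<Sum>i\<in>UNIV. p i) = 1" and "(\<Sum>i\<in>UNIV. q i) = 1"
    and "\<And>i. q i \<le> K * p i"
  shows "quad_form (cov_matrix q) g \<le> K * quad_form (cov_matrix p) g"
proof -
  define m where "m = (\<Sum>i\<in>UNIV. p i * g i)"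
  have "quad_form (cov_matrix q) g \<le> quad_form (cov_matrix q) g + ((\<Sum>i\<in>UNIV. q i * g i) - m)\<^sup>2"
    by simp
  also have "\<dots> = (\<Sum>i\<in>UNIV. q i * (g i - m)\<^sup>2)"
    using assms(2) by (rule quad_form_cov_matrix_add_square)
  also have "\<dots> \<le> (\<Sum>i\<in>UNIV. K * p i * (g i - m)\<^sup>2)"
    by (intro sum_mono mult_right_mono assms(3)) simp
  also have "\<dots> = K * (\<Sum>i\<in>UNIV. p i * (g i - m)\<^sup>2)"
    by (simp add: sum_distrib_left mult.assoc)
  also have "(\<Sum>i\<in>UNIV. p i * (g i - m)\<^sup>2) = quad_form (cov_matrix p) g"
    using quad_form_cov_matrix_add_square[OF assms(1), of g m] by (simp add: m_def)
  finally show ?thesis .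
qed

lemma abs_le_sup_norm:
  fixes A :: "'b::finite \<Rightarrow> real"
  shows "\<bar>A b\<bar> \<le> sup_norm A"
  unfolding sup_norm_def by (rule Max_ge) auto

lemma exp_mult_le_exp_mult:
  fixes a a' eta B :: real
  assumes "eta \<ge> 0" and "\<bar>a\<bar> \<le> B" and "\<bar>a'\<bar> \<le> B"
  shows "exp (eta * a') \<le> exp (2 * eta * B) * exp (eta * a)"
proof -
  have "eta * (a' - a) \<le> eta * (2 * B)"
    using assms by (intro mult_left_mono) auto
  then show ?thesis
    by (simp add: exp_add[symmetric] algebra_simps)
qed

lemma exp_mult_le_exp_mult_sup_norm:
  fixes A A' :: "'b::finite \<Rightarrow> real"
  assumes "eta \<ge> 0" and "sup_norm A \<le> B" and "sup_norm A' \<le> B"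
  shows "exp (eta * A' b) \<le> exp (2 * eta * B) * exp (eta * A b)"
  using assms abs_le_sup_norm order_trans by (blast intro: exp_mult_le_exp_mult)

theorem mainTheorem9:
  fixes A At g :: "'b::finite \<Rightarrow> real" and eta BA :: real
  assumes "eta > 0" and "BA > 0"
    and "sup_norm A \<le> BA" and "sup_norm At \<le> BA"
    and "prob_vector (\<lambda>b. exp (eta * A b))"
    and "prob_vector (\<lambda>b. exp (eta * At b))"
  shows "exp (2 * eta * BA) * quad_form (cov_matrix (\<lambda>b. exp (eta * A b))) g
           \<ge> quad_form (cov_matrix (\<lambda>b. exp (eta * At b))) g
       \<and> quad_form (cov_matrix (\<lambda>b. exp (eta * At b))) g
           \<ge> exp (- 2 * eta * BA) * quad_form (cov_matrix (\<lambda>b. exp (eta * A b))) g"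
proof -
  let ?L = "quad_form (cov_matrix (\<lambda>b. exp (eta * A b))) g"
  let ?H = "quad_form (cov_matrix (\<lambda>b. exp (eta * At b))) g"
  have sums: "(\<Sum>b\<in>UNIV. exp (eta * A b)) = 1" "(\<Sum>b\<in>UNIV. exp (eta * At b)) = 1"
    using assms(5,6) by (simp_all add: prob_vector_def)
  have upper: "?H \<le> exp (2 * eta * BA) * ?L"
    using assms(1,3,4) sums
    by (intro quad_form_cov_matrix_mono exp_mult_le_exp_mult_sup_norm) auto
  have "?L \<le> exp (2 * eta * BA) * ?H"
    using assms(1,3,4) sums
    by (intro quad_form_cov_matrix_mono exp_mult_le_exp_mult_sup_norm) auto
  then have "exp (- 2 * eta * BA) * ?L \<le> ?H"
    by (simp add: exp_minus field_simps)
  with upper show ?thesis by simp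
qed

end
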